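(* Let $\bm{w}^\star\in\mathbb{R}^m$ with $\|\bm{w}^\star\|_2\le1$, let $\bm{w}\in\mathbb{B}(\bm{w}^\star,r_{\mathrm{CNN}})$ with $r_{\mathrm{CNN}}=c\frac{\rho_{\mathrm{CNN}}(\|\bm{w}^\star\|_2)}{K^2}$ the radius on which the population Hessian satisfies $C_3\frac{\rho_{\mathrm{CNN}}(\|\bm{w}^\star\|_2)}{K}\bm{I}\preceq\nabla^2 f(\bm{w})\preceq C_4K\bm{I}$, and let $\bm{v}\in\mathbb{R}^m$ with $\|\bm{v}\|_2=1$. Define $G=\langle\bm{v},(\nabla^2\ell(\bm{w};\bm{x},y)-\mathbb{E}[\nabla^2\ell(\bm{w};\bm{x},y)])\bm{v}\rangle$. There exists a constant $C$ such that $\|G\|_{\psi_1}\le CK^2$.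
   Context: $\phi(x)=1/(1+e^{-x})$. $d=mK$, $\bm{x}^{(k)}=(x_{m(k-1)+1},\dots,x_{mk})^\top$, $H(\bm{w},\bm{x})=\frac1K\sum_{k=1}^K\phi(\bm{w}^\top\bm{x}^{(k)})$ for $\bm{w}\in\mathbb{R}^m$. $\bm{x}\sim\mathcal{N}(\bm{0},\bm{I}_d)$, $y\in\{0,1\}$ with $\mathbb{P}(y=1\mid\bm{x})=H(\bm{w}^\star,\bm{x})$. Loss $\ell(\bm{w};\bm{x},y)=-y\log H(\bm{w},\bm{x})-(1-y)\log(1-H(\bm{w},\bm{x}))$, population risk $f=\mathbb{E}[\ell]$. With $z\sim\mathcal{N}(0,\sigma^2)$, $\rho_{\mathrm{CNN}}(\sigma)=\min\{\mathbb{E}[(\phi'(z)z)^2],\mathbb{E}[\phi'(z)^2]\}$. $\|X\|_{\psi_1}=\sup_{p\ge1}p^{-1}(\mathbb{E}|X|^p)^{1/p}$. *)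

theory Defs
  imports "HOL-Probability.Probability"
begin

definition sigmoid :: "real \<Rightarrow> real" where
  "sigmoid x = 1 / (1 + exp (- x))"

(* vectors in R^n are represented as nat => real; only indices < n matter *)
definition vnorm :: "nat \<Rightarrow> (nat \<Rightarrow> real) \<Rightarrow> real" where
  "vnorm n w = sqrt (\<Sum>i<n. (w i)^2)"

(* <w, x^(k+1)> : the (k+1)-th block of x (0-indexed block k), x^(k+1) = (x_{mk+1},...,x_{m(k+1)}) *)
definition blk_inner :: "nat \<Rightarrow> (nat \<Rightarrow> real) \<Rightarrow> (nat \<Rightarrow> real) \<Rightarrow> nat \<Rightarrow> real" where
  "blk_inner m w x k = (\<Sum>i<m. w i * x (m * k + i))"

definition Hcnn :: "nat \<Rightarrow> nat \<Rightarrow> (nat \<Rightarrow> real) \<Rightarrow> (nat \<Rightarrow> real) \<Rightarrow> real" where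
  "Hcnn m K w x = (1 / real K) * (\<Sum>k<K. sigmoid (blk_inner m w x k))"

(* cross-entropy loss; y = True encodes y = 1 *)
definition loss :: "nat \<Rightarrow> nat \<Rightarrow> (nat \<Rightarrow> real) \<Rightarrow> (nat \<Rightarrow> real) \<Rightarrow> bool \<Rightarrow> real" where
  "loss m K w x y = - (of_bool y) * ln (Hcnn m K w x) - (1 - of_bool y) * ln (1 - Hcnn m K w x)"

definition partial :: "nat \<Rightarrow> ((nat \<Rightarrow> real) \<Rightarrow> real) \<Rightarrow> (nat \<Rightarrow> real) \<Rightarrow> real" where
  "partial i g w = deriv (\<lambda>t. g (w(i := t))) (w i)"

definition hess :: "((nat \<Rightarrow> real) \<Rightarrow> real) \<Rightarrow> (nat \<Rightarrow> real) \<Rightarrow> nat \<Rightarrow> nat \<Rightarrow> real" where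
  "hess g w i j = partial j (\<lambda>u. partial i g u) w"

definition std_gauss :: "real measure" where
  "std_gauss = density lborel std_normal_density"

definition gauss_vec :: "nat \<Rightarrow> (nat \<Rightarrow> real) measure" where
  "gauss_vec d = PiM {..<d} (\<lambda>_. std_gauss)"

definition data_measure :: "nat \<Rightarrow> nat \<Rightarrow> (nat \<Rightarrow> real) \<Rightarrow> ((nat \<Rightarrow> real) \<times> bool) measure" where
  "data_measure m K wstar =
     density (gauss_vec (m * K) \<Otimes>\<^sub>M count_space UNIV)
       (\<lambda>(x, y). ennreal (if y then Hcnn m K wstar x else 1 - Hcnn m K wstar x))"

definition exp_hess :: "nat \<Rightarrow> nat \<Rightarrow> (nat \<Rightarrow> real) \<Rightarrow> (nat \<Rightarrow> real) \<Rightarrow> nat \<Rightarrow> nat \<Rightarrow> real" where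
  "exp_hess m K wstar w i j =
     integral\<^sup>L (data_measure m K wstar) (\<lambda>(x, y). hess (\<lambda>u. loss m K u x y) w i j)"

definition Gvar :: "nat \<Rightarrow> nat \<Rightarrow> (nat \<Rightarrow> real) \<Rightarrow> (nat \<Rightarrow> real) \<Rightarrow> (nat \<Rightarrow> real)
                    \<Rightarrow> (nat \<Rightarrow> real) \<times> bool \<Rightarrow> real" where
  "Gvar m K wstar w v = (\<lambda>(x, y).
     (\<Sum>i<m. \<Sum>j<m. v i * (hess (\<lambda>u. loss m K u x y) w i j - exp_hess m K wstar w i j) * v j))"

definition psi1_norm :: "'a measure \<Rightarrow> ('a \<Rightarrow> real) \<Rightarrow> ereal" where
  "psi1_norm M X =
     (SUP p\<in>{1::real..}.
        (let mom = (\<integral>\<^sup>+ \<omega>. ennreal (\<bar>X \<omega>\<bar> powr p) \<partial>M)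
         in if mom = \<top> then \<infinity> else ereal (enn2real mom powr (1 / p) / p)))"

definition gauss_scalar :: "real \<Rightarrow> real measure" where
  "gauss_scalar \<sigma> = (if \<sigma> = 0 then return lborel 0 else density lborel (normal_density 0 \<sigma>))"

definition rho_cnn :: "real \<Rightarrow> real" where
  "rho_cnn \<sigma> = min (integral\<^sup>L (gauss_scalar \<sigma>) (\<lambda>z. (deriv sigmoid z * z)^2))
                     (integral\<^sup>L (gauss_scalar \<sigma>) (\<lambda>z. (deriv sigmoid z)^2))"

end

(* The loss is -ln F, where F averages the sigmoids sigma(+-<w, x^(k)>) over the K blocks, so the
   Hessian form in direction v is (d_v F)^2 / F^2 - d_v^2 F / F.  Since |sigma'| and |sigma''| are
   bounded by sigma itself, both terms are controlled by F: the form is at most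
   (K + 1) * sum_k <v, x^(k)>^2 in absolute value, uniformly in w.  Each <v, x^(k)> is a standard
   Gaussian, whose 2p-th absolute moment is at most 2 (2p)^p; with the convexity of t^p over the
   blocks this gives E|G|^p <= 6 (16 p (K + 1) K)^p, i.e. a psi_1-norm of order K^2.  The labels
   only reweight the Gaussian by conditional probabilities, which at most doubles each integral. *)

theory Submission
  imports Defs
begin

section \<open>The logistic function\<close>

definition sigmoid_deriv :: "real \<Rightarrow> real" where
  "sigmoid_deriv t = sigmoid t * (1 - sigmoid t)"

definition sigmoid_deriv2 :: "real \<Rightarrow> real" where
  "sigmoid_deriv2 t = sigmoid_deriv t * (1 - 2 * sigmoid t)"

lemma sigmoid_pos: "0 < sigmoid t"
  unfolding sigmoid_def by (simp add: add_pos_pos)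

lemma sigmoid_less_one: "sigmoid t < 1"
  unfolding sigmoid_def by (simp add: add_pos_pos)

lemma sigmoid_minus: "sigmoid (- t) = 1 - sigmoid t"
proof -
  have "1 + exp t \<noteq> 0" by (smt (verit) exp_gt_zero)
  then show ?thesis
    unfolding sigmoid_def exp_minus by (simp add: field_simps)
qed

lemma sigmoid_deriv_pos: "0 < sigmoid_deriv t"
  unfolding sigmoid_deriv_def using sigmoid_pos[of t] sigmoid_less_one[of t] by simp

lemma sigmoid_deriv_le_sigmoid: "sigmoid_deriv t \<le> sigmoid t"
  unfolding sigmoid_deriv_def using sigmoid_pos[of t] sigmoid_less_one[of t]
  by (simp add: mult_le_cancel_left1)

lemma abs_sigmoid_deriv2_le: "\<bar>sigmoid_deriv2 t\<bar> \<le> sigmoid_deriv t"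
  unfolding sigmoid_deriv2_def using sigmoid_pos[of t] sigmoid_less_one[of t] sigmoid_deriv_pos[of t]
  by (simp add: abs_mult abs_le_iff mult_le_cancel_left1)

lemma DERIV_sigmoid: "(sigmoid has_real_derivative sigmoid_deriv t) (at t)"
proof -
  have p: "1 + exp (-t) \<noteq> 0" by (smt (verit) exp_gt_zero)
  have "((\<lambda>t. 1 / (1 + exp (- t))) has_real_derivative exp (-t) / (1 + exp (-t))^2) (at t)"
    using p by (auto intro!: derivative_eq_intros simp: power2_eq_square)
  moreover have "exp (-t) / (1 + exp (-t))^2 = sigmoid_deriv t"
    unfolding sigmoid_deriv_def sigmoid_def using p by (simp add: field_simps power2_eq_square)
  ultimately show ?thesis unfolding sigmoid_def[abs_def] by simp
qed

lemma DERIV_sigmoid_deriv: "(sigmoid_deriv has_real_derivative sigmoid_deriv2 t) (at t)"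
proof -
  have "((\<lambda>t. sigmoid t * (1 - sigmoid t)) has_real_derivative
        sigmoid_deriv t * (1 - sigmoid t) - sigmoid t * sigmoid_deriv t) (at t)"
    by (auto intro!: derivative_eq_intros DERIV_sigmoid)
  moreover have "sigmoid_deriv t * (1 - sigmoid t) - sigmoid t * sigmoid_deriv t = sigmoid_deriv2 t"
    unfolding sigmoid_deriv2_def by (simp add: algebra_simps)
  ultimately show ?thesis unfolding sigmoid_deriv_def[abs_def] by simp
qed

lemma sigmoid_measurable [measurable]: "sigmoid \<in> borel_measurable borel"
  unfolding sigmoid_def[abs_def] by measurable

lemma sigmoid_deriv_measurable [measurable]: "sigmoid_deriv \<in> borel_measurable borel"
  unfolding sigmoid_deriv_def[abs_def] by measurable

lemma sigmoid_deriv2_measurable [measurable]: "sigmoid_deriv2 \<in> borel_measurable borel"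
  unfolding sigmoid_deriv2_def[abs_def] by measurable


section \<open>Derivatives of the averaged logistic output\<close>

text \<open>With \<open>\<sigma> = 1\<close> this is \<open>H(u, x)\<close>, with \<open>\<sigma> = -1\<close> it is \<open>1 - H(u, x)\<close>.\<close>

definition avg_sigmoid :: "nat \<Rightarrow> nat \<Rightarrow> (nat \<Rightarrow> real) \<Rightarrow> real \<Rightarrow> (nat \<Rightarrow> real) \<Rightarrow> real" where
  "avg_sigmoid m K x \<sigma> u = (1 / real K) * (\<Sum>k<K. sigmoid (\<sigma> * blk_inner m u x k))"

definition avg_sigmoid_grad :: "nat \<Rightarrow> nat \<Rightarrow> (nat \<Rightarrow> real) \<Rightarrow> real \<Rightarrow> nat \<Rightarrow> (nat \<Rightarrow> real) \<Rightarrow> real" where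
  "avg_sigmoid_grad m K x \<sigma> i u =
     (1 / real K) * (\<Sum>k<K. \<sigma> * sigmoid_deriv (\<sigma> * blk_inner m u x k) * x (m * k + i))"

definition avg_sigmoid_hess ::
    "nat \<Rightarrow> nat \<Rightarrow> (nat \<Rightarrow> real) \<Rightarrow> real \<Rightarrow> nat \<Rightarrow> nat \<Rightarrow> (nat \<Rightarrow> real) \<Rightarrow> real" where
  "avg_sigmoid_hess m K x \<sigma> i j u =
     (1 / real K) * (\<Sum>k<K. \<sigma> * \<sigma> * sigmoid_deriv2 (\<sigma> * blk_inner m u x k) * x (m * k + i) * x (m * k + j))"

lemma blk_inner_fun_upd:
  assumes "j < m"
  shows "blk_inner m (u(j := t)) x k = blk_inner m u x k + (t - u j) * x (m * k + j)"
proof -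
  have "(\<Sum>l<m. (u(j := t)) l * x (m * k + l)) =
        (\<Sum>l<m. u l * x (m * k + l) + (if l = j then (t - u j) * x (m * k + l) else 0))"
    by (intro sum.cong) (auto simp: algebra_simps)
  then show ?thesis unfolding blk_inner_def using assms by (simp add: sum.distrib)
qed

lemma DERIV_comp_blk_inner:
  assumes "j < m" and f: "\<And>z. (f has_real_derivative f' z) (at z)"
  shows "((\<lambda>t. f (\<sigma> * blk_inner m (u(j := t)) x k)) has_real_derivative
           f' (\<sigma> * blk_inner m u x k) * (\<sigma> * x (m * k + j))) (at (u j))"
proof -
  have "((\<lambda>t. \<sigma> * (blk_inner m u x k + (t - u j) * x (m * k + j))) has_real_derivative
          \<sigma> * x (m * k + j)) (at (u j))"
    by (auto intro!: derivative_eq_intros)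
  from DERIV_chain2[OF f this] show ?thesis
    using blk_inner_fun_upd[OF assms(1)] by simp
qed

lemma DERIV_avg_sigmoid:
  assumes "j < m"
  shows "((\<lambda>t. avg_sigmoid m K x \<sigma> (u(j := t))) has_real_derivative avg_sigmoid_grad m K x \<sigma> j u) (at (u j))"
proof -
  have "((\<lambda>t. \<Sum>k<K. sigmoid (\<sigma> * blk_inner m (u(j := t)) x k)) has_real_derivative
        (\<Sum>k<K. sigmoid_deriv (\<sigma> * blk_inner m u x k) * (\<sigma> * x (m * k + j)))) (at (u j))"
    by (rule DERIV_sum) (rule DERIV_comp_blk_inner[OF assms DERIV_sigmoid])
  from DERIV_cmult[OF this, of "1 / real K"] show ?thesis
    unfolding avg_sigmoid_def avg_sigmoid_grad_def by (simp add: algebra_simps)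
qed

lemma DERIV_avg_sigmoid_grad:
  assumes "j < m"
  shows "((\<lambda>t. avg_sigmoid_grad m K x \<sigma> i (u(j := t))) has_real_derivative
           avg_sigmoid_hess m K x \<sigma> i j u) (at (u j))"
proof -
  have "((\<lambda>t. \<Sum>k<K. \<sigma> * x (m * k + i) * sigmoid_deriv (\<sigma> * blk_inner m (u(j := t)) x k))
         has_real_derivative
        (\<Sum>k<K. \<sigma> * x (m * k + i) * (sigmoid_deriv2 (\<sigma> * blk_inner m u x k) * (\<sigma> * x (m * k + j)))))
        (at (u j))"
    by (intro DERIV_sum DERIV_cmult DERIV_comp_blk_inner[OF assms DERIV_sigmoid_deriv])
  from DERIV_cmult[OF this, of "1 / real K"] show ?thesis
    unfolding avg_sigmoid_hess_def avg_sigmoid_grad_def by (simp add: algebra_simps)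
qed

lemma avg_sigmoid_pos: "K \<ge> 1 \<Longrightarrow> 0 < avg_sigmoid m K x \<sigma> u"
  unfolding avg_sigmoid_def using sigmoid_pos
  by (intro mult_pos_pos) (auto intro!: sum_pos simp: lessThan_empty_iff)

definition nll_hess :: "nat \<Rightarrow> nat \<Rightarrow> (nat \<Rightarrow> real) \<Rightarrow> real \<Rightarrow> (nat \<Rightarrow> real) \<Rightarrow> nat \<Rightarrow> nat \<Rightarrow> real" where
  "nll_hess m K x \<sigma> w i j =
     avg_sigmoid_grad m K x \<sigma> i w * avg_sigmoid_grad m K x \<sigma> j w / (avg_sigmoid m K x \<sigma> w)\<^sup>2
     - avg_sigmoid_hess m K x \<sigma> i j w / avg_sigmoid m K x \<sigma> w"

lemma partial_neg_ln_avg_sigmoid: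
  assumes "i < m" "K \<ge> 1"
  shows "partial i (\<lambda>u. - ln (avg_sigmoid m K x \<sigma> u)) u =
           - avg_sigmoid_grad m K x \<sigma> i u / avg_sigmoid m K x \<sigma> u"
proof -
  have "((\<lambda>t. - ln (avg_sigmoid m K x \<sigma> (u(i := t)))) has_real_derivative
        - (avg_sigmoid_grad m K x \<sigma> i u / avg_sigmoid m K x \<sigma> u)) (at (u i))"
    using DERIV_avg_sigmoid[OF assms(1)] avg_sigmoid_pos[OF assms(2)]
    by (auto intro!: derivative_eq_intros simp: divide_simps)
  then show ?thesis unfolding partial_def by (simp add: DERIV_imp_deriv)
qed

lemma hess_neg_ln_avg_sigmoid:
  assumes "i < m" "j < m" "K \<ge> 1"
  shows "hess (\<lambda>u. - ln (avg_sigmoid m K x \<sigma> u)) w i j = nll_hess m K x \<sigma> w i j"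
proof -
  define F where "F = avg_sigmoid m K x \<sigma> w"
  have F: "F \<noteq> 0" unfolding F_def using avg_sigmoid_pos[OF assms(3)] by (metis less_irrefl)
  have "((\<lambda>t. - avg_sigmoid_grad m K x \<sigma> i (w(j := t)) / avg_sigmoid m K x \<sigma> (w(j := t)))
         has_real_derivative
         (- avg_sigmoid_hess m K x \<sigma> i j w * F - (- avg_sigmoid_grad m K x \<sigma> i w) * avg_sigmoid_grad m K x \<sigma> j w)
           / (F * F)) (at (w j))"
    using DERIV_divide[OF DERIV_minus[OF DERIV_avg_sigmoid_grad[OF assms(2), of K x \<sigma> i w]]
                          DERIV_avg_sigmoid[OF assms(2), of K x \<sigma> w]] F
    by (simp add: F_def)
  moreover have "(- avg_sigmoid_hess m K x \<sigma> i j w * F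
                  - (- avg_sigmoid_grad m K x \<sigma> i w) * avg_sigmoid_grad m K x \<sigma> j w) / (F * F)
                 = nll_hess m K x \<sigma> w i j"
    unfolding nll_hess_def F_def[symmetric] using F by (simp add: field_simps power2_eq_square)
  ultimately show ?thesis
    unfolding hess_def partial_def[of j]
    by (simp add: partial_neg_ln_avg_sigmoid[OF assms(1,3)] DERIV_imp_deriv)
qed

definition label_sign :: "bool \<Rightarrow> real" where
  "label_sign y = (if y then 1 else -1)"

lemma Hcnn_eq_avg_sigmoid: "Hcnn m K u x = avg_sigmoid m K x 1 u"
  unfolding Hcnn_def avg_sigmoid_def by simp

lemma one_minus_Hcnn_eq_avg_sigmoid: "K \<ge> 1 \<Longrightarrow> 1 - Hcnn m K u x = avg_sigmoid m K x (-1) u"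
  unfolding Hcnn_def avg_sigmoid_def by (simp add: sigmoid_minus sum_subtractf field_simps)

lemma loss_eq_neg_ln_avg_sigmoid:
  "K \<ge> 1 \<Longrightarrow> loss m K u x y = - ln (avg_sigmoid m K x (label_sign y) u)"
  unfolding loss_def one_minus_Hcnn_eq_avg_sigmoid[of K] unfolding Hcnn_eq_avg_sigmoid label_sign_def
  by simp

lemma hess_loss:
  assumes "K \<ge> 1" "i < m" "j < m"
  shows "hess (\<lambda>u. loss m K u x y) w i j = nll_hess m K x (label_sign y) w i j"
  unfolding loss_eq_neg_ln_avg_sigmoid[OF assms(1)] by (rule hess_neg_ln_avg_sigmoid[OF assms(2,3,1)])


section \<open>Pointwise bounds on the Hessian of the loss\<close>

definition quad_form :: "nat \<Rightarrow> (nat \<Rightarrow> nat \<Rightarrow> real) \<Rightarrow> (nat \<Rightarrow> real) \<Rightarrow> real" where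
  "quad_form m A v = (\<Sum>i<m. \<Sum>j<m. v i * A i j * v j)"

lemma sum_mult_avg_sigmoid_grad:
  "(\<Sum>i<m. v i * avg_sigmoid_grad m K x \<sigma> i w) =
     (1 / real K) * (\<Sum>k<K. \<sigma> * sigmoid_deriv (\<sigma> * blk_inner m w x k) * blk_inner m v x k)"
  unfolding avg_sigmoid_grad_def blk_inner_def
  by (simp add: sum_distrib_left sum_distrib_right sum.swap[of _ "{..<K}"] algebra_simps)

lemma quad_form_avg_sigmoid_hess:
  "quad_form m (\<lambda>i j. avg_sigmoid_hess m K x \<sigma> i j w) v =
     (1 / real K) * (\<Sum>k<K. \<sigma> * \<sigma> * sigmoid_deriv2 (\<sigma> * blk_inner m w x k) * (blk_inner m v x k)\<^sup>2)"
proof -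
  have "quad_form m (\<lambda>i j. avg_sigmoid_hess m K x \<sigma> i j w) v =
        (1 / real K) * (\<Sum>k<K. \<Sum>i<m. \<Sum>j<m. \<sigma> * \<sigma> * sigmoid_deriv2 (\<sigma> * blk_inner m w x k)
                                        * (v i * x (m * k + i)) * (v j * x (m * k + j)))"
    unfolding quad_form_def avg_sigmoid_hess_def
    by (simp add: sum_distrib_left sum_distrib_right sum.swap[of _ "{..<K}"] algebra_simps)
  moreover have "(\<Sum>i<m. \<Sum>j<m. c * (v i * x (m * k + i)) * (v j * x (m * k + j))) = c * (blk_inner m v x k)\<^sup>2"
    for c k
    unfolding power2_eq_square blk_inner_def sum_product by (simp only: sum_distrib_left mult.assoc)
  ultimately show ?thesis by simp
qed

lemma quad_form_nll_hess:
  "quad_form m (nll_hess m K x \<sigma> w) v =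
     (\<Sum>i<m. v i * avg_sigmoid_grad m K x \<sigma> i w)\<^sup>2 / (avg_sigmoid m K x \<sigma> w)\<^sup>2
     - quad_form m (\<lambda>i j. avg_sigmoid_hess m K x \<sigma> i j w) v / avg_sigmoid m K x \<sigma> w"
proof -
  let ?F = "avg_sigmoid m K x \<sigma> w" and ?g = "\<lambda>i. avg_sigmoid_grad m K x \<sigma> i w"
    and ?h = "\<lambda>i j. avg_sigmoid_hess m K x \<sigma> i j w"
  have "v i * nll_hess m K x \<sigma> w i j * v j = (v i * ?g i) * (v j * ?g j) / ?F\<^sup>2 - v i * ?h i j * v j / ?F"
    for i j
    unfolding nll_hess_def by (simp add: divide_inverse algebra_simps)
  then show ?thesis
    unfolding quad_form_def by (simp add: sum_subtractf sum_divide_distrib power2_eq_square sum_product)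
qed

text \<open>The derivative weights are dominated by the sigmoids themselves, and those average to the
  denominator \<open>avg_sigmoid\<close>: this is why no factor \<open>1 / H\<close> survives in the bounds.\<close>

lemma abs_avg_div_avg_sigmoid_le:
  assumes K: "K \<ge> 1" and t: "\<And>k. \<bar>t k\<bar> \<le> sigmoid (\<sigma> * blk_inner m w x k)"
  shows "\<bar>(1 / real K) * (\<Sum>k<K. t k * c k) / avg_sigmoid m K x \<sigma> w\<bar> \<le> (\<Sum>k<K. \<bar>c k\<bar>)"
proof -
  let ?s = "\<lambda>k. sigmoid (\<sigma> * blk_inner m w x k)"
  have "\<bar>\<Sum>k<K. t k * c k\<bar> \<le> (\<Sum>k<K. ?s k * \<bar>c k\<bar>)"
    using t by (intro order_trans[OF sum_abs] sum_mono) (simp add: abs_mult mult_right_mono)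
  also have "\<dots> \<le> (\<Sum>k<K. (\<Sum>l<K. ?s l) * \<bar>c k\<bar>)"
    using sigmoid_pos by (intro sum_mono mult_right_mono member_le_sum) (auto intro: less_imp_le)
  finally have "\<bar>(1 / real K) * (\<Sum>k<K. t k * c k)\<bar> \<le> avg_sigmoid m K x \<sigma> w * (\<Sum>k<K. \<bar>c k\<bar>)"
    unfolding avg_sigmoid_def by (simp add: abs_mult sum_distrib_left[symmetric] divide_right_mono)
  moreover have "0 < avg_sigmoid m K x \<sigma> w" by (rule avg_sigmoid_pos[OF K])
  ultimately show ?thesis
    by (simp only: abs_divide abs_of_pos pos_divide_le_eq mult.commute)
qed

lemma abs_label_sign: "\<bar>label_sign y\<bar> = 1"
  unfolding label_sign_def by simp

lemma abs_mult_sigmoid_deriv_le: "\<bar>\<sigma>\<bar> = 1 \<Longrightarrow> \<bar>\<sigma> * sigmoid_deriv s\<bar> \<le> sigmoid s"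
  using sigmoid_deriv_le_sigmoid sigmoid_deriv_pos by (simp add: abs_mult less_imp_le)

lemma abs_mult_sigmoid_deriv2_le: "\<bar>\<sigma>\<bar> = 1 \<Longrightarrow> \<bar>\<sigma> * \<sigma> * sigmoid_deriv2 s\<bar> \<le> sigmoid s"
  using order_trans[OF abs_sigmoid_deriv2_le sigmoid_deriv_le_sigmoid] by (simp add: abs_mult)

lemma abs_nll_hess_form_le:
  assumes K: "K \<ge> 1" and \<sigma>: "\<bar>\<sigma>\<bar> = 1"
  shows "\<bar>quad_form m (nll_hess m K x \<sigma> w) v\<bar> \<le> (real K + 1) * (\<Sum>k<K. (blk_inner m v x k)\<^sup>2)"
proof -
  define F where "F = avg_sigmoid m K x \<sigma> w"
  define S where "S = (\<Sum>k<K. (blk_inner m v x k)\<^sup>2)"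
  have "\<bar>(\<Sum>i<m. v i * avg_sigmoid_grad m K x \<sigma> i w) / F\<bar> \<le> (\<Sum>k<K. \<bar>blk_inner m v x k\<bar>)"
    unfolding sum_mult_avg_sigmoid_grad F_def
    by (rule abs_avg_div_avg_sigmoid_le[OF K abs_mult_sigmoid_deriv_le[OF \<sigma>]])
  then have "((\<Sum>i<m. v i * avg_sigmoid_grad m K x \<sigma> i w) / F)\<^sup>2 \<le> (\<Sum>k<K. \<bar>blk_inner m v x k\<bar>)\<^sup>2"
    by (metis abs_ge_zero power2_abs power_mono)
  also have "\<dots> \<le> real K * S"
    using sum_squared_le_sum_of_squares[of "\<lambda>k. \<bar>blk_inner m v x k\<bar>" "{..<K}"]
    by (simp add: S_def mult.commute)
  finally have grad: "(\<Sum>i<m. v i * avg_sigmoid_grad m K x \<sigma> i w)\<^sup>2 / F\<^sup>2 \<le> real K * S"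
    by (simp add: power_divide)
  have hess: "\<bar>quad_form m (\<lambda>i j. avg_sigmoid_hess m K x \<sigma> i j w) v / F\<bar> \<le> S"
    using abs_avg_div_avg_sigmoid_le[OF K abs_mult_sigmoid_deriv2_le[OF \<sigma>],
        where c = "\<lambda>k. (blk_inner m v x k)\<^sup>2"]
    unfolding quad_form_avg_sigmoid_hess F_def S_def by simp
  have "0 \<le> (\<Sum>i<m. v i * avg_sigmoid_grad m K x \<sigma> i w)\<^sup>2 / F\<^sup>2" by simp
  moreover have "(real K + 1) * S = real K * S + S" by (simp add: algebra_simps)
  ultimately show ?thesis
    unfolding quad_form_nll_hess F_def[symmetric] S_def[symmetric] using grad hess by linarith
qed

lemma abs_nll_hess_le:
  assumes K: "K \<ge> 1" and \<sigma>: "\<bar>\<sigma>\<bar> = 1"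
  shows "\<bar>nll_hess m K x \<sigma> w i j\<bar> \<le> (real K + 1) * (\<Sum>k<K. (x (m * k + i))\<^sup>2 + (x (m * k + j))\<^sup>2)"
proof -
  define F where "F = avg_sigmoid m K x \<sigma> w"
  define a where "a k = x (m * k + i)" for k
  define b where "b k = x (m * k + j)" for k
  define S where "S = (\<Sum>k<K. (a k)\<^sup>2 + (b k)\<^sup>2)"
  have grad: "\<bar>avg_sigmoid_grad m K x \<sigma> l w / F\<bar> \<le> (\<Sum>k<K. \<bar>x (m * k + l)\<bar>)" for l
    unfolding avg_sigmoid_grad_def F_def
    by (rule abs_avg_div_avg_sigmoid_le[OF K abs_mult_sigmoid_deriv_le[OF \<sigma>]])
  have "\<bar>avg_sigmoid_hess m K x \<sigma> i j w / F\<bar> \<le> (\<Sum>k<K. \<bar>a k * b k\<bar>)"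
    using abs_avg_div_avg_sigmoid_le[OF K abs_mult_sigmoid_deriv2_le[OF \<sigma>], where c = "\<lambda>k. a k * b k"]
    unfolding avg_sigmoid_hess_def F_def a_def b_def by (simp add: mult.assoc)
  also have "\<dots> \<le> S"
    unfolding S_def
  proof (rule sum_mono)
    fix k
    have "2 * \<bar>a k\<bar> * \<bar>b k\<bar> \<le> \<bar>a k\<bar>\<^sup>2 + \<bar>b k\<bar>\<^sup>2" by (rule sum_squares_bound)
    moreover have "0 \<le> \<bar>a k\<bar> * \<bar>b k\<bar>" by simp
    ultimately show "\<bar>a k * b k\<bar> \<le> (a k)\<^sup>2 + (b k)\<^sup>2"
      unfolding abs_mult power2_abs by linarith
  qed
  finally have hess: "\<bar>avg_sigmoid_hess m K x \<sigma> i j w / F\<bar> \<le> S" .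
  have "\<bar>avg_sigmoid_grad m K x \<sigma> i w * avg_sigmoid_grad m K x \<sigma> j w / F\<^sup>2\<bar>
        = \<bar>avg_sigmoid_grad m K x \<sigma> i w / F\<bar> * \<bar>avg_sigmoid_grad m K x \<sigma> j w / F\<bar>"
    by (simp add: power2_eq_square abs_mult)
  also have "\<dots> \<le> (\<Sum>k<K. \<bar>a k\<bar>) * (\<Sum>k<K. \<bar>b k\<bar>)"
    using grad[of i] grad[of j] unfolding a_def b_def by (intro mult_mono) auto
  also have "\<dots> \<le> ((\<Sum>k<K. \<bar>a k\<bar>)\<^sup>2 + (\<Sum>k<K. \<bar>b k\<bar>)\<^sup>2) / 2"
    using sum_squares_bound[of "\<Sum>k<K. \<bar>a k\<bar>" "\<Sum>k<K. \<bar>b k\<bar>"] by simp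
  also have "\<dots> \<le> (real K * (\<Sum>k<K. (a k)\<^sup>2) + real K * (\<Sum>k<K. (b k)\<^sup>2)) / 2"
    using sum_squared_le_sum_of_squares[of "\<lambda>k. \<bar>a k\<bar>" "{..<K}"]
      sum_squared_le_sum_of_squares[of "\<lambda>k. \<bar>b k\<bar>" "{..<K}"]
    by (simp add: mult.commute)
  also have "\<dots> \<le> real K * S"
    unfolding S_def sum.distrib by (simp add: distrib_left sum_nonneg)
  finally have "\<bar>avg_sigmoid_grad m K x \<sigma> i w * avg_sigmoid_grad m K x \<sigma> j w / F\<^sup>2\<bar> \<le> real K * S" .
  moreover have "(real K + 1) * S = real K * S + S" by (simp add: algebra_simps)
  ultimately show ?thesis
    unfolding nll_hess_def F_def[symmetric] S_def[symmetric] a_def[symmetric] b_def[symmetric]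
    using hess by linarith
qed


section \<open>Gaussian moments of a block projection\<close>

lemma prob_space_std_gauss: "prob_space std_gauss"
  unfolding std_gauss_def by (rule prob_space_normal_density) simp

lemma sets_std_gauss [simp]: "sets std_gauss = sets borel"
  unfolding std_gauss_def by simp

lemma measurable_std_gauss [simp]: "measurable std_gauss N = measurable borel N"
  by (rule measurable_cong_sets) simp_all

lemma prob_space_gauss_vec: "prob_space (gauss_vec n)"
  unfolding gauss_vec_def by (intro prob_space_PiM prob_space_std_gauss)

lemma measurable_gauss_vec_component [measurable]: "(\<lambda>x. x a) \<in> borel_measurable (gauss_vec n)"
proof (cases "a < n")
  case True
  have "(\<lambda>x. x a) \<in> measurable (gauss_vec n) std_gauss"
    unfolding gauss_vec_def using True by (intro measurable_component_singleton) auto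
  moreover have "measurable (gauss_vec n) std_gauss = measurable (gauss_vec n) borel"
    by (rule measurable_cong_sets) simp_all
  ultimately show ?thesis by simp
next
  case False
  then have "x a = undefined" if "x \<in> space (gauss_vec n)" for x
    using that unfolding gauss_vec_def space_PiM by (auto intro: PiE_arb)
  then show ?thesis by (subst measurable_cong[where g = "\<lambda>_. undefined"]) auto
qed

lemma blk_inner_measurable [measurable]: "(\<lambda>x. blk_inner m u x k) \<in> borel_measurable (gauss_vec n)"
  unfolding blk_inner_def by measurable

lemma avg_sigmoid_measurable [measurable]: "(\<lambda>x. avg_sigmoid m K x \<sigma> w) \<in> borel_measurable (gauss_vec n)"
  unfolding avg_sigmoid_def by measurable

lemma nll_hess_measurable [measurable]: "(\<lambda>x. nll_hess m K x \<sigma> w i j) \<in> borel_measurable (gauss_vec n)"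
  unfolding nll_hess_def avg_sigmoid_grad_def avg_sigmoid_hess_def by measurable

lemma nn_integral_exp_std_gauss: "(\<integral>\<^sup>+t. ennreal (exp (c * t)) \<partial>std_gauss) = ennreal (exp (c\<^sup>2 / 2))"
proof -
  have shift: "std_normal_density t * exp (c * t) = exp (c\<^sup>2 / 2) * std_normal_density (-c + 1 * t)" for t
  proof -
    have "exp (- t\<^sup>2 / 2) * exp (c * t) = exp (c\<^sup>2 / 2) * exp (- (-c + 1 * t)\<^sup>2 / 2)"
      unfolding mult_exp_exp by (rule arg_cong[where f = exp]) (simp add: power2_eq_square field_simps)
    then show ?thesis unfolding std_normal_density_def by simp
  qed
  have "(\<integral>\<^sup>+t. ennreal (std_normal_density t) \<partial>lborel) = 1"
    using nn_integral_eq_integral[OF integrable_normal_density[of 1 0]] integral_normal_density[of 1 0]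
    by simp
  then have "(\<integral>\<^sup>+t. ennreal (std_normal_density (-c + 1 * t)) \<partial>lborel) = 1"
    using nn_integral_real_affine[of "\<lambda>x. ennreal (std_normal_density x)" 1 "-c"] by simp
  then have "(\<integral>\<^sup>+t. ennreal (exp (c\<^sup>2 / 2)) * ennreal (std_normal_density (-c + 1 * t)) \<partial>lborel)
             = ennreal (exp (c\<^sup>2 / 2))"
    by (simp add: nn_integral_cmult)
  then show ?thesis
    unfolding std_gauss_def using shift
    by (simp add: nn_integral_density ennreal_mult'[symmetric])
qed

lemma sum_block_eq:
  fixes g :: "nat \<Rightarrow> 'a::comm_monoid_add"
  assumes "k < K"
  shows "(\<Sum>a<m * K. if a \<in> {m * k..<m * k + m} then g a else 0) = (\<Sum>i<m. g (m * k + i))"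
proof -
  have "m * k + m \<le> m * K"
    using mult_le_mono2[of "k + 1" K m] assms by simp
  then have "{..<m * K} \<inter> {m * k..<m * k + m} = {m * k..<m * k + m}" by auto
  then show ?thesis
    using sum.inter_restrict[of "{..<m * K}" g "{m * k..<m * k + m}"]
    by (simp add: sum.atLeastLessThan_shift_0[of g] lessThan_atLeast0 comp_def)
qed

lemma nn_integral_exp_blk_inner:
  assumes "k < K"
  shows "(\<integral>\<^sup>+x. ennreal (exp (l * blk_inner m v x k)) \<partial>gauss_vec (m * K)) =
           ennreal (exp (l\<^sup>2 / 2 * (\<Sum>i<m. (v i)\<^sup>2)))"
proof -
  interpret product_sigma_finite "\<lambda>_. std_gauss"
    unfolding product_sigma_finite_def using prob_space_imp_sigma_finite[OF prob_space_std_gauss] by simp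
  define c where "c a = (if a \<in> {m * k..<m * k + m} then v (a - m * k) else 0)" for a
  have blk: "blk_inner m v x k = (\<Sum>a<m * K. c a * x a)" for x
  proof -
    have "(\<Sum>a<m * K. c a * x a) = (\<Sum>a<m * K. if a \<in> {m * k..<m * k + m} then v (a - m * k) * x a else 0)"
      by (intro sum.cong) (auto simp: c_def)
    then show ?thesis unfolding blk_inner_def sum_block_eq[OF assms] by simp
  qed
  have "(\<integral>\<^sup>+x. ennreal (exp (l * blk_inner m v x k)) \<partial>gauss_vec (m * K)) =
        (\<integral>\<^sup>+x. (\<Prod>a<m * K. ennreal (exp (l * c a * x a))) \<partial>Pi\<^sub>M {..<m * K} (\<lambda>_. std_gauss))"
    unfolding gauss_vec_def blk by (simp add: sum_distrib_left exp_sum prod_ennreal mult.assoc)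
  also have "\<dots> = (\<Prod>a<m * K. \<integral>\<^sup>+t. ennreal (exp (l * c a * t)) \<partial>std_gauss)"
    by (rule product_nn_integral_prod) auto
  also have "\<dots> = ennreal (exp (\<Sum>a<m * K. (l * c a)\<^sup>2 / 2))"
    by (simp add: nn_integral_exp_std_gauss prod_ennreal exp_sum)
  also have "(\<Sum>a<m * K. (l * c a)\<^sup>2 / 2) =
             (\<Sum>a<m * K. if a \<in> {m * k..<m * k + m} then (l * v (a - m * k))\<^sup>2 / 2 else 0)"
    by (intro sum.cong) (auto simp: c_def)
  also have "\<dots> = l\<^sup>2 / 2 * (\<Sum>i<m. (v i)\<^sup>2)"
    unfolding sum_block_eq[OF assms] by (simp add: sum_distrib_left power_mult_distrib)
  finally show ?thesis .
qed


text \<open>This is \<open>ln y \<le> y - 1\<close> at \<open>y = |a| / sqrt q\<close>; integrating the two exponentials against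
  the Gaussian turns it into the moment bound that follows.\<close>

lemma abs_powr_le_exp:
  fixes q a :: real
  assumes q: "0 < q"
  shows "\<bar>a\<bar> powr q \<le> q powr (q / 2) * exp (- q) * (exp (sqrt q * a) + exp (- sqrt q * a))"
proof (cases "a = 0")
  case True
  then show ?thesis by simp
next
  case False
  define y where "y = \<bar>a\<bar> / sqrt q"
  have y: "0 < y" using False q unfolding y_def by simp
  have ay: "\<bar>a\<bar> = y * sqrt q" unfolding y_def using q by simp
  have ln_a: "ln \<bar>a\<bar> = ln y + ln q / 2"
    unfolding ay using y q by (simp add: ln_mult ln_sqrt)
  have qy: "q * y = sqrt q * \<bar>a\<bar>"
  proof -
    have "q = sqrt q * sqrt q" using q by simp
    then show ?thesis unfolding ay by (metis mult.assoc mult.commute)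
  qed
  have "q * ln y \<le> q * (y - 1)"
    using ln_le_minus_one[OF y] q by (intro mult_left_mono) auto
  then have key: "q * ln \<bar>a\<bar> \<le> q / 2 * ln q - q + sqrt q * \<bar>a\<bar>"
    using ln_a qy by (simp add: algebra_simps)
  have "\<bar>a\<bar> powr q = exp (q * ln \<bar>a\<bar>)" using False by (simp add: powr_def mult.commute)
  also have "\<dots> \<le> exp (q / 2 * ln q - q + sqrt q * \<bar>a\<bar>)" using key by simp
  also have "\<dots> = q powr (q / 2) * exp (- q) * exp (sqrt q * \<bar>a\<bar>)"
  proof -
    have "q powr (q / 2) = exp (q / 2 * ln q)" using q by (simp add: powr_def)
    then show ?thesis by (simp only: mult_exp_exp) simp
  qed
  also have "\<dots> \<le> q powr (q / 2) * exp (- q) * (exp (sqrt q * a) + exp (- sqrt q * a))"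
  proof (rule mult_left_mono)
    show "exp (sqrt q * \<bar>a\<bar>) \<le> exp (sqrt q * a) + exp (- sqrt q * a)"
      by (cases "a \<ge> 0") (auto simp: add_increasing add_increasing2 less_imp_le)
  qed simp
  finally show ?thesis .
qed

lemma nn_integral_abs_blk_inner_powr_le:
  assumes k: "k < K" and q: "0 < q" and v: "(\<Sum>i<m. (v i)\<^sup>2) = 1"
  shows "(\<integral>\<^sup>+x. ennreal (\<bar>blk_inner m v x k\<bar> powr q) \<partial>gauss_vec (m * K)) \<le> ennreal (2 * q powr (q / 2))"
proof -
  define A where "A = q powr (q / 2) * exp (- q)"
  have A: "0 \<le> A" unfolding A_def by simp
  have "(\<integral>\<^sup>+x. ennreal (\<bar>blk_inner m v x k\<bar> powr q) \<partial>gauss_vec (m * K)) \<le>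
        (\<integral>\<^sup>+x. ennreal A * (ennreal (exp (sqrt q * blk_inner m v x k))
                            + ennreal (exp (- sqrt q * blk_inner m v x k))) \<partial>gauss_vec (m * K))"
  proof (intro nn_integral_mono)
    fix x
    have "ennreal (\<bar>blk_inner m v x k\<bar> powr q)
          \<le> ennreal (A * (exp (sqrt q * blk_inner m v x k) + exp (- sqrt q * blk_inner m v x k)))"
      unfolding A_def by (intro ennreal_leI abs_powr_le_exp q)
    then show "ennreal (\<bar>blk_inner m v x k\<bar> powr q) \<le> ennreal A * (ennreal (exp (sqrt q * blk_inner m v x k))
                            + ennreal (exp (- sqrt q * blk_inner m v x k)))"
      using A by (simp add: ennreal_mult)
  qed
  also have "\<dots> = ennreal A * (ennreal (exp (q / 2)) + ennreal (exp (q / 2)))"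
    using nn_integral_exp_blk_inner[OF k, where l = "sqrt q"] nn_integral_exp_blk_inner[OF k, where l = "- sqrt q"] v q
    by (simp add: nn_integral_cmult nn_integral_add)
  also have "\<dots> = ennreal (2 * q powr (q / 2) * exp (- (q / 2)))"
  proof -
    have "exp (- q) * exp (q / 2) = exp (- (q / 2))" by (simp add: mult_exp_exp)
    then show ?thesis
      using A unfolding A_def
      by (simp add: ennreal_mult'[symmetric] ennreal_plus[symmetric] algebra_simps del: ennreal_plus)
  qed
  also have "\<dots> \<le> ennreal (2 * q powr (q / 2))"
    using q by (intro ennreal_leI) simp
  finally show ?thesis .
qed

lemma nn_integral_blk_inner_square_le:
  assumes "k < K" "(\<Sum>i<m. (v i)\<^sup>2) = 1"
  shows "(\<integral>\<^sup>+x. ennreal ((blk_inner m v x k)\<^sup>2) \<partial>gauss_vec (m * K)) \<le> 4"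
  using nn_integral_abs_blk_inner_powr_le[OF assms(1) _ assms(2), of 2] by simp

lemma nn_integral_component_square_le:
  assumes "k < K" "i < m"
  shows "(\<integral>\<^sup>+x. ennreal ((x (m * k + i))\<^sup>2) \<partial>gauss_vec (m * K)) \<le> 4"
proof -
  let ?e = "\<lambda>l. if l = i then 1 else 0 :: real"
  have "blk_inner m ?e x k = x (m * k + i)" for x
    unfolding blk_inner_def using assms(2)
    by (subst sum.cong[OF refl, where h = "\<lambda>l. if l = i then x (m * k + i) else 0"]) auto
  moreover have "(\<Sum>l<m. (?e l)\<^sup>2) = 1"
    using assms(2) by (subst sum.cong[OF refl, where h = "\<lambda>l. if l = i then 1 else 0"]) auto
  ultimately show ?thesis
    using nn_integral_blk_inner_square_le[OF assms(1), where m = m and v = ?e] by simp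
qed

lemma powr_add_le:
  fixes x y p :: real
  assumes "0 \<le> x" "0 \<le> y" "0 \<le> p"
  shows "(x + y) powr p \<le> 2 powr p * (x powr p + y powr p)"
proof -
  have "(x + y) powr p \<le> (2 * max x y) powr p"
    using assms by (intro powr_mono2) auto
  also have "\<dots> = 2 powr p * max x y powr p"
    using assms by (simp add: powr_mult)
  also have "max x y powr p \<le> x powr p + y powr p"
    by (simp add: max_def)
  finally show ?thesis by (simp add: mult_left_mono)
qed

lemma nn_integral_blk_inner_shifted_powr_le:
  assumes k: "k < K" and p: "1 \<le> p" and v: "(\<Sum>i<m. (v i)\<^sup>2) = 1"
  shows "(\<integral>\<^sup>+x. ennreal (((blk_inner m v x k)\<^sup>2 + 8) powr p) \<partial>gauss_vec (m * K))
           \<le> ennreal (3 * (16 * p) powr p)"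
proof -
  interpret prob_space "gauss_vec (m * K)" by (rule prob_space_gauss_vec)
  let ?b = "\<lambda>x. blk_inner m v x k"
  have "(\<integral>\<^sup>+x. ennreal (((?b x)\<^sup>2 + 8) powr p) \<partial>gauss_vec (m * K))
        \<le> (\<integral>\<^sup>+x. ennreal (2 powr p) * (ennreal (\<bar>?b x\<bar> powr (2 * p)) + ennreal (8 powr p)) \<partial>gauss_vec (m * K))"
  proof (intro nn_integral_mono)
    fix x
    have "((?b x)\<^sup>2) powr p = \<bar>?b x\<bar> powr (2 * p)"
      by (simp add: powr_powr[symmetric])
    then have "((?b x)\<^sup>2 + 8) powr p \<le> 2 powr p * (\<bar>?b x\<bar> powr (2 * p) + 8 powr p)"
      using powr_add_le[of "(?b x)\<^sup>2" 8 p] p by simp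
    then have "ennreal (((?b x)\<^sup>2 + 8) powr p) \<le> ennreal (2 powr p * (\<bar>?b x\<bar> powr (2 * p) + 8 powr p))"
      by (rule ennreal_leI)
    then show "ennreal (((?b x)\<^sup>2 + 8) powr p) \<le> ennreal (2 powr p) * (ennreal (\<bar>?b x\<bar> powr (2 * p)) + ennreal (8 powr p))"
      by (simp add: ennreal_mult')
  qed
  also have "\<dots> = ennreal (2 powr p) * ((\<integral>\<^sup>+x. ennreal (\<bar>?b x\<bar> powr (2 * p)) \<partial>gauss_vec (m * K)) + ennreal (8 powr p))"
    by (simp add: nn_integral_cmult nn_integral_add emeasure_space_1)
  also have "\<dots> \<le> ennreal (2 powr p) * (ennreal (2 * (2 * p) powr p) + ennreal (8 powr p))"
    using nn_integral_abs_blk_inner_powr_le[OF k _ v, of "2 * p"] p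
    by (intro mult_left_mono add_right_mono) auto
  also have "\<dots> = ennreal (2 powr p * (2 * (2 * p) powr p + 8 powr p))"
    by (simp add: ennreal_mult')
  also have "\<dots> \<le> ennreal (2 powr p * (3 * (8 * p) powr p))"
  proof (intro ennreal_leI mult_left_mono)
    have "(2 * p) powr p \<le> (8 * p) powr p" "(8::real) powr p \<le> (8 * p) powr p"
      using p by (auto intro!: powr_mono2)
    then show "2 * (2 * p) powr p + 8 powr p \<le> 3 * (8 * p) powr p" by simp
  qed simp
  also have "\<dots> = ennreal (3 * (16 * p) powr p)"
    using p by (simp add: powr_mult[symmetric])
  finally show ?thesis .
qed


section \<open>The centred Hessian form under the data distribution\<close>

lemma sets_data_measure [simp]:
  "sets (data_measure m K wstar) = sets (gauss_vec (m * K) \<Otimes>\<^sub>M count_space UNIV)"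
  unfolding data_measure_def by simp

lemma measurable_data_measure [simp]:
  "measurable (data_measure m K wstar) N = measurable (gauss_vec (m * K) \<Otimes>\<^sub>M count_space UNIV) N"
  by (rule measurable_cong_sets) simp_all

lemma nn_integral_data_measure_le:
  assumes K: "K \<ge> 1" and f [measurable]: "f \<in> borel_measurable (gauss_vec (m * K))"
  shows "(\<integral>\<^sup>+z. f (fst z) \<partial>data_measure m K wstar) \<le> 2 * (\<integral>\<^sup>+x. f x \<partial>gauss_vec (m * K))"
proof -
  let ?G = "gauss_vec (m * K)" and ?C = "count_space (UNIV :: bool set)"
  let ?d = "\<lambda>(x, y). ennreal (if y then Hcnn m K wstar x else 1 - Hcnn m K wstar x)"
  interpret C: sigma_finite_measure ?C by (rule sigma_finite_measure_count_space_finite) simp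
  have H: "0 \<le> Hcnn m K wstar x" "Hcnn m K wstar x \<le> 1" for x
    using avg_sigmoid_pos[OF K, of m x 1 wstar] avg_sigmoid_pos[OF K, of m x "-1" wstar]
    by (simp_all add: Hcnn_eq_avg_sigmoid flip: one_minus_Hcnn_eq_avg_sigmoid[OF K])
  have "(\<integral>\<^sup>+z. f (fst z) \<partial>data_measure m K wstar) = (\<integral>\<^sup>+z. ?d z * f (fst z) \<partial>(?G \<Otimes>\<^sub>M ?C))"
    unfolding data_measure_def Hcnn_def by (rule nn_integral_density) measurable
  also have "\<dots> \<le> (\<integral>\<^sup>+z. f (fst z) \<partial>(?G \<Otimes>\<^sub>M ?C))"
  proof (intro nn_integral_mono)
    fix z :: "(nat \<Rightarrow> real) \<times> bool"
    have "?d z \<le> 1" using H by (cases z) (auto simp: ennreal_le_1)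
    then show "?d z * f (fst z) \<le> f (fst z)"
      using mult_right_mono[of "?d z" 1 "f (fst z)"] by simp
  qed
  also have "\<dots> = (\<integral>\<^sup>+x. \<integral>\<^sup>+y. f (fst (x, y)) \<partial>?C \<partial>?G)"
    by (rule C.nn_integral_fst[symmetric]) measurable
  also have "\<dots> = (\<integral>\<^sup>+x. 2 * f x \<partial>?G)"
    by (simp add: nn_integral_count_space_finite UNIV_bool mult_2 mult.commute[of _ 2])
  also have "\<dots> = 2 * (\<integral>\<^sup>+x. f x \<partial>?G)"
    by (simp add: nn_integral_cmult)
  finally show ?thesis .
qed


lemma measurable_label_sign_split:
  assumes "\<And>\<sigma>. (\<lambda>x. f x \<sigma>) \<in> borel_measurable (gauss_vec n)"
  shows "(\<lambda>z. f (fst z) (label_sign (snd z))) \<in> borel_measurable (gauss_vec n \<Otimes>\<^sub>M count_space UNIV)"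
proof -
  note [measurable] = assms[of 1] assms[of "-1"]
  have "(\<lambda>z. f (fst z) (label_sign (snd z))) = (\<lambda>z. if snd z then f (fst z) 1 else f (fst z) (-1))"
    by (auto simp: label_sign_def)
  then show ?thesis by simp
qed

lemma integrable_hess_loss:
  assumes K: "K \<ge> 1" and ij: "i < m" "j < m"
  shows "integrable (data_measure m K wstar) (\<lambda>(x, y). hess (\<lambda>u. loss m K u x y) w i j)"
proof -
  let ?h = "\<lambda>z. nll_hess m K (fst z) (label_sign (snd z)) w i j"
  let ?b = "\<lambda>x. (real K + 1) * (\<Sum>k<K. (x (m * k + i))\<^sup>2 + (x (m * k + j))\<^sup>2)"
  have "(\<integral>\<^sup>+x. ennreal (?b x) \<partial>gauss_vec (m * K)) =
      ennreal (real K + 1) * (\<Sum>k<K. (\<integral>\<^sup>+x. ennreal ((x (m * k + i))\<^sup>2) \<partial>gauss_vec (m * K))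
                                 + (\<integral>\<^sup>+x. ennreal ((x (m * k + j))\<^sup>2) \<partial>gauss_vec (m * K)))"
    by (simp add: ennreal_mult' sum_nonneg nn_integral_cmult nn_integral_sum nn_integral_add flip: sum_ennreal)
  also have "\<dots> \<le> ennreal (real K + 1) * (\<Sum>k<K. 4 + 4)"
    using nn_integral_component_square_le ij by (intro mult_left_mono sum_mono add_mono) auto
  also have "\<dots> < \<infinity>"
    by (simp add: ennreal_mult_less_top of_nat_less_top)
  finally have b: "(\<integral>\<^sup>+x. ennreal (?b x) \<partial>gauss_vec (m * K)) < \<infinity>" .
  have "(\<integral>\<^sup>+z. ennreal (norm (?h z)) \<partial>data_measure m K wstar) \<le> (\<integral>\<^sup>+z. ennreal (?b (fst z)) \<partial>data_measure m K wstar)"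
    using abs_nll_hess_le[OF K abs_label_sign] by (intro nn_integral_mono ennreal_leI) simp
  also have "\<dots> \<le> 2 * (\<integral>\<^sup>+x. ennreal (?b x) \<partial>gauss_vec (m * K))"
    by (rule nn_integral_data_measure_le[OF K]) measurable
  also have "\<dots> < \<infinity>"
    using b by (simp add: ennreal_mult_less_top)
  finally have "integrable (data_measure m K wstar) ?h"
    by (intro integrableI_bounded) (auto intro!: measurable_label_sign_split nll_hess_measurable)
  moreover have "(\<lambda>(x, y). hess (\<lambda>u. loss m K u x y) w i j) = ?h"
    by (auto simp: hess_loss[OF K ij])
  ultimately show ?thesis by simp
qed

lemma quad_form_diff: "quad_form m (\<lambda>i j. A i j - B i j) v = quad_form m A v - quad_form m B v"
  unfolding quad_form_def by (simp add: algebra_simps sum_subtractf)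

lemma integral_quad_form:
  assumes "\<And>i j. i < m \<Longrightarrow> j < m \<Longrightarrow> integrable M (\<lambda>z. A z i j)"
  shows "(\<integral>z. quad_form m (A z) v \<partial>M) = quad_form m (\<lambda>i j. \<integral>z. A z i j \<partial>M) v"
proof -
  have int: "integrable M (\<lambda>z. v i * A z i j * v j)" if "i < m" "j < m" for i j
    using assms[OF that] by simp
  have "(\<integral>z. quad_form m (A z) v \<partial>M) = (\<Sum>i<m. \<integral>z. (\<Sum>j<m. v i * A z i j * v j) \<partial>M)"
    unfolding quad_form_def
    by (intro Bochner_Integration.integral_sum Bochner_Integration.integrable_sum int) auto
  also have "\<dots> = (\<Sum>i<m. \<Sum>j<m. \<integral>z. v i * A z i j * v j \<partial>M)"
    by (intro sum.cong refl Bochner_Integration.integral_sum int) auto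
  finally show ?thesis
    unfolding quad_form_def by (simp only: integral_mult_left_zero integral_mult_right_zero)
qed


definition loss_hess_form :: "nat \<Rightarrow> nat \<Rightarrow> (nat \<Rightarrow> real) \<Rightarrow> (nat \<Rightarrow> real) \<Rightarrow> (nat \<Rightarrow> real) \<times> bool \<Rightarrow> real" where
  "loss_hess_form m K w v z = quad_form m (nll_hess m K (fst z) (label_sign (snd z)) w) v"

lemma loss_hess_form_measurable [measurable]:
  "loss_hess_form m K w v \<in> borel_measurable (gauss_vec n \<Otimes>\<^sub>M count_space UNIV)"
  unfolding loss_hess_form_def quad_form_def by (intro measurable_label_sign_split) measurable

lemma Gvar_eq_centred:
  assumes K: "K \<ge> 1"
  shows "Gvar m K wstar w v z =
           loss_hess_form m K w v z - (\<integral>z'. loss_hess_form m K w v z' \<partial>data_measure m K wstar)"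
proof -
  let ?H = "\<lambda>z i j. case z of (x, y) \<Rightarrow> hess (\<lambda>u. loss m K u x y) w i j"
  have form: "quad_form m (?H z) v = loss_hess_form m K w v z" for z
    unfolding loss_hess_form_def quad_form_def by (cases z) (simp add: hess_loss[OF K])
  have "quad_form m (exp_hess m K wstar w) v = (\<integral>z. quad_form m (?H z) v \<partial>data_measure m K wstar)"
    unfolding exp_hess_def by (rule integral_quad_form[symmetric]) (rule integrable_hess_loss[OF K])
  moreover have "Gvar m K wstar w v z = quad_form m (\<lambda>i j. ?H z i j - exp_hess m K wstar w i j) v"
    unfolding Gvar_def quad_form_def by (cases z) simp
  ultimately show ?thesis
    unfolding quad_form_diff form by simp
qed

lemma abs_integral_loss_hess_form_le:
  assumes K: "K \<ge> 1" and v: "(\<Sum>i<m. (v i)\<^sup>2) = 1"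
  shows "\<bar>\<integral>z. loss_hess_form m K w v z \<partial>data_measure m K wstar\<bar> \<le> 8 * real K * (real K + 1)"
proof -
  let ?M = "data_measure m K wstar"
  let ?S = "\<lambda>x. (real K + 1) * (\<Sum>k<K. (blk_inner m v x k)\<^sup>2)"
  have "(\<integral>\<^sup>+x. ennreal (?S x) \<partial>gauss_vec (m * K)) =
        ennreal (real K + 1) * (\<Sum>k<K. \<integral>\<^sup>+x. ennreal ((blk_inner m v x k)\<^sup>2) \<partial>gauss_vec (m * K))"
    by (simp add: ennreal_mult' sum_nonneg nn_integral_cmult nn_integral_sum flip: sum_ennreal)
  also have "\<dots> \<le> ennreal (real K + 1) * (\<Sum>k<K. 4)"
    using nn_integral_blk_inner_square_le[OF _ v] by (intro mult_left_mono sum_mono) auto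
  also have "\<dots> = ennreal (4 * real K * (real K + 1))"
    by (simp add: ennreal_mult' ennreal_of_nat_eq_real_of_nat[symmetric] mult.commute)
  finally have S: "(\<integral>\<^sup>+x. ennreal (?S x) \<partial>gauss_vec (m * K)) \<le> ennreal (4 * real K * (real K + 1))" .
  have "(\<integral>\<^sup>+z. ennreal \<bar>loss_hess_form m K w v z\<bar> \<partial>?M) \<le> (\<integral>\<^sup>+z. ennreal (?S (fst z)) \<partial>?M)"
    unfolding loss_hess_form_def
    by (intro nn_integral_mono ennreal_leI abs_nll_hess_form_le[OF K abs_label_sign])
  also have "\<dots> \<le> 2 * (\<integral>\<^sup>+x. ennreal (?S x) \<partial>gauss_vec (m * K))"
    by (rule nn_integral_data_measure_le[OF K]) measurable
  also have "\<dots> \<le> 2 * ennreal (4 * real K * (real K + 1))"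
    by (intro mult_left_mono S) simp
  also have "\<dots> = ennreal (2 * (4 * real K * (real K + 1)))"
    by (simp only: ennreal_mult'[of 2 "4 * real K * (real K + 1)"]) simp
  also have "\<dots> = ennreal (8 * real K * (real K + 1))"
    by (rule arg_cong[where f = ennreal]) simp
  finally have "(\<integral>\<^sup>+z. ennreal \<bar>loss_hess_form m K w v z\<bar> \<partial>?M) \<le> ennreal (8 * real K * (real K + 1))" .
  then have "(\<integral>z. \<bar>loss_hess_form m K w v z\<bar> \<partial>?M) \<le> 8 * real K * (real K + 1)"
    by (subst integral_eq_nn_integral) (auto intro!: enn2real_leI borel_measurable_abs)
  then show ?thesis
    using integral_abs_bound[of ?M "loss_hess_form m K w v"] by linarith
qed


lemma abs_Gvar_le:
  assumes K: "K \<ge> 1" and v: "(\<Sum>i<m. (v i)\<^sup>2) = 1"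
  shows "\<bar>Gvar m K wstar w v z\<bar> \<le>
           (real K + 1) * real K * ((1 / real K) * (\<Sum>k<K. (blk_inner m v (fst z) k)\<^sup>2 + 8))"
proof -
  let ?S = "\<Sum>k<K. (blk_inner m v (fst z) k)\<^sup>2"
  have "\<bar>loss_hess_form m K w v z\<bar> \<le> (real K + 1) * ?S"
    unfolding loss_hess_form_def by (rule abs_nll_hess_form_le[OF K abs_label_sign])
  then have "\<bar>Gvar m K wstar w v z\<bar> \<le> (real K + 1) * ?S + 8 * real K * (real K + 1)"
    unfolding Gvar_eq_centred[OF K] using abs_integral_loss_hess_form_le[OF K v, where w = w and wstar = wstar] by linarith
  also have "\<dots> = (real K + 1) * real K * ((1 / real K) * (\<Sum>k<K. (blk_inner m v (fst z) k)\<^sup>2 + 8))"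
    using K by (simp add: sum.distrib field_simps)
  finally show ?thesis .
qed

lemma avg_powr_le:
  fixes b :: "nat \<Rightarrow> real"
  assumes "K \<ge> 1" "1 \<le> p" "\<And>k. 0 < b k"
  shows "((1 / real K) * (\<Sum>k<K. b k)) powr p \<le> (1 / real K) * (\<Sum>k<K. b k powr p)"
  using convex_on_sum[OF _ _ powr_convex[OF assms(2)], of "{..<K}" "\<lambda>_. 1 / real K" b] assms
  by (simp add: lessThan_empty_iff sum_distrib_left)

lemma nn_integral_avg_le:
  fixes f :: "nat \<Rightarrow> 'a \<Rightarrow> real"
  assumes K: "K \<ge> 1" and [measurable]: "\<And>k. f k \<in> borel_measurable M"
    and nonneg: "\<And>k x. 0 \<le> f k x" and le: "\<And>k. k < K \<Longrightarrow> (\<integral>\<^sup>+x. ennreal (f k x) \<partial>M) \<le> ennreal c"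
  shows "(\<integral>\<^sup>+x. ennreal ((1 / real K) * (\<Sum>k<K. f k x)) \<partial>M) \<le> ennreal c"
proof -
  have pt: "ennreal ((1 / real K) * (\<Sum>k<K. f k x)) = ennreal (1 / real K) * (\<Sum>k<K. ennreal (f k x))" for x
    by (subst ennreal_mult') (simp_all add: sum_nonneg nonneg)
  have "(\<integral>\<^sup>+x. ennreal ((1 / real K) * (\<Sum>k<K. f k x)) \<partial>M) =
        ennreal (1 / real K) * (\<Sum>k<K. \<integral>\<^sup>+x. ennreal (f k x) \<partial>M)"
    unfolding pt by (simp add: nn_integral_cmult nn_integral_sum del: sum_ennreal)
  also have "\<dots> \<le> ennreal (1 / real K) * (\<Sum>k<K. ennreal c)"
    using le by (intro mult_left_mono sum_mono) auto
  also have "\<dots> = ennreal c"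
    using K by (simp add: ennreal_of_nat_eq_real_of_nat ennreal_mult'[symmetric] ennreal_mult''[symmetric])
  finally show ?thesis .
qed

lemma nn_integral_abs_Gvar_powr_le:
  assumes K: "K \<ge> 1" and p: "1 \<le> p" and v: "(\<Sum>i<m. (v i)\<^sup>2) = 1"
  shows "(\<integral>\<^sup>+z. ennreal (\<bar>Gvar m K wstar w v z\<bar> powr p) \<partial>data_measure m K wstar)
           \<le> ennreal (6 * (16 * p * (real K + 1) * real K) powr p)"
proof -
  define A where "A = ((real K + 1) * real K) powr p"
  define g where "g x = (1 / real K) * (\<Sum>k<K. ((blk_inner m v x k)\<^sup>2 + 8) powr p)" for x
  have A: "0 \<le> A" unfolding A_def by simp
  have pointwise: "\<bar>Gvar m K wstar w v z\<bar> powr p \<le> A * g (fst z)" for z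
  proof -
    have "\<bar>Gvar m K wstar w v z\<bar> powr p
          \<le> ((real K + 1) * real K * ((1 / real K) * (\<Sum>k<K. (blk_inner m v (fst z) k)\<^sup>2 + 8))) powr p"
      using p by (intro powr_mono2 abs_Gvar_le[OF K v]) auto
    also have "\<dots> = A * ((1 / real K) * (\<Sum>k<K. (blk_inner m v (fst z) k)\<^sup>2 + 8)) powr p"
      unfolding A_def by (rule powr_mult)
    also have "\<dots> \<le> A * g (fst z)"
      unfolding g_def using A by (intro mult_left_mono avg_powr_le[OF K p]) (auto intro: add_nonneg_pos)
    finally show ?thesis .
  qed
  have g_int: "(\<integral>\<^sup>+x. ennreal (g x) \<partial>gauss_vec (m * K)) \<le> ennreal (3 * (16 * p) powr p)"
    unfolding g_def
    by (rule nn_integral_avg_le[OF K]) (use nn_integral_blk_inner_shifted_powr_le[OF _ p v] in auto)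
  have "(\<integral>\<^sup>+z. ennreal (\<bar>Gvar m K wstar w v z\<bar> powr p) \<partial>data_measure m K wstar)
        \<le> (\<integral>\<^sup>+z. ennreal A * ennreal (g (fst z)) \<partial>data_measure m K wstar)"
    using pointwise A by (intro nn_integral_mono) (simp add: ennreal_mult'[symmetric] ennreal_leI)
  also have "\<dots> \<le> 2 * (\<integral>\<^sup>+x. ennreal A * ennreal (g x) \<partial>gauss_vec (m * K))"
    by (rule nn_integral_data_measure_le[OF K]) (simp add: g_def)
  also have "\<dots> = 2 * ennreal A * (\<integral>\<^sup>+x. ennreal (g x) \<partial>gauss_vec (m * K))"
    by (simp add: nn_integral_cmult g_def mult.assoc)
  also have "\<dots> \<le> 2 * ennreal A * ennreal (3 * (16 * p) powr p)"
    by (intro mult_left_mono g_int) simp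
  also have "\<dots> = ennreal (6 * (A * (16 * p) powr p))"
    using A by (simp add: ennreal_mult' ennreal_mult''[symmetric] mult_ac)
  also have "A * (16 * p) powr p = (16 * p * (real K + 1) * real K) powr p"
    unfolding A_def using p by (simp add: powr_mult[symmetric] mult_ac)
  finally show ?thesis .
qed


section \<open>From moment bounds to the \<open>\<psi>\<^sub>1\<close>-norm\<close>

lemma psi1_norm_le:
  assumes a: "1 \<le> a" and b: "0 \<le> b"
    and moments: "\<And>p. 1 \<le> p \<Longrightarrow> (\<integral>\<^sup>+\<omega>. ennreal (\<bar>X \<omega>\<bar> powr p) \<partial>M) \<le> ennreal (a * (b * p) powr p)"
  shows "psi1_norm M X \<le> ereal (a * b)"
  unfolding psi1_norm_def
proof (rule SUP_least)
  fix p :: real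
  assume "p \<in> {1..}"
  then have p: "1 \<le> p" by simp
  define mom where "mom = (\<integral>\<^sup>+\<omega>. ennreal (\<bar>X \<omega>\<bar> powr p) \<partial>M)"
  have mom_le: "mom \<le> ennreal (a * (b * p) powr p)"
    unfolding mom_def by (rule moments[OF p])
  then have finite: "mom \<noteq> \<top>"
    by (metis ennreal_less_top leD top.not_eq_extremum)
  have "enn2real mom powr (1 / p) \<le> (a * (b * p) powr p) powr (1 / p)"
    using mom_le a b p by (intro powr_mono2 enn2real_leI) auto
  also have "\<dots> = a powr (1 / p) * (b * p)"
    using b p by (simp add: powr_mult powr_powr)
  also have "\<dots> \<le> a * (b * p)"
    using a b p by (intro mult_right_mono) (auto intro: order_trans[OF powr_mono[of "1 / p" 1 a]])
  finally have "enn2real mom powr (1 / p) / p \<le> a * b"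
    using p by (simp add: divide_le_eq mult_ac)
  then show "(let mom = \<integral>\<^sup>+\<omega>. ennreal (\<bar>X \<omega>\<bar> powr p) \<partial>M
              in if mom = \<top> then \<infinity> else ereal (enn2real mom powr (1 / p) / p)) \<le> ereal (a * b)"
    unfolding mom_def[symmetric] using finite by simp
qed

theorem lemma9:
  fixes c :: real
  assumes "c > 0"
  shows "\<exists>C::real. \<forall>(m::nat) (K::nat) (wstar::nat \<Rightarrow> real) (w::nat \<Rightarrow> real) (v::nat \<Rightarrow> real).
           m \<ge> 1 \<longrightarrow> K \<ge> 1 \<longrightarrow>
           vnorm m wstar \<le> 1 \<longrightarrow>
           vnorm m (\<lambda>i. w i - wstar i) \<le> c * rho_cnn (vnorm m wstar) / (real K)^2 \<longrightarrow>
           vnorm m v = 1 \<longrightarrow>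
           psi1_norm (data_measure m K wstar) (Gvar m K wstar w v) \<le> ereal (C * (real K)^2)"
proof (intro exI[of _ 192] allI impI)
  \<comment> \<open>The Hessian-form bound holds for every \<open>w\<close>.\<close>
  fix m K :: nat and wstar w v :: "nat \<Rightarrow> real"
  assume K: "1 \<le> K" and "vnorm m v = 1"
  then have v: "(\<Sum>i<m. (v i)\<^sup>2) = 1" unfolding vnorm_def by simp
  have "psi1_norm (data_measure m K wstar) (Gvar m K wstar w v) \<le> ereal (6 * (16 * (real K + 1) * real K))"
    using nn_integral_abs_Gvar_powr_le[OF K _ v] by (intro psi1_norm_le) (auto simp: mult_ac)
  also have "\<dots> \<le> ereal (192 * (real K)\<^sup>2)"
    using K by (simp add: power2_eq_square)
  finally show "psi1_norm (data_measure m K wstar) (Gvar m K wstar w v) \<le> ereal (192 * (real K)\<^sup>2)" .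
qed

end
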